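(* Let $(X,d)$ be a ubiquitously amenable and uniformly locally finite extended metric space. Then for all $r,\varepsilon>0$ there exists $S>0$ such that for every finite nonempty $M\subseteq X$ there is a finite set $F$ with $M\subseteq F\subseteq\bar B(M,S)$ and $|\partial^+_rF|\le\varepsilon|F|$.
   Context: An extended metric may take the value $\infty$. $\bar B(A,R)=\{x:d(x,A)\le R\}$. $(X,d)$ is uniformly locally finite if $\sup_{x\in X}|\bar B(x,R)|<\infty$ for every $R>0$. Outer boundary: $\partial^+_RA=\{x\in X\setminus A:d(x,A)\le R\}$; $R$-boundary: $\partial_RA=\{x\in X:d(x,A)\le R\text{ and }d(x,X\setminus A)\le R\}$. A finite nonempty $F$ is $(R,\varepsilon)$-Følner if $|\partial_RF|\le\varepsilon|F|$. $(X,d)$ is ubiquitously amenable if for all $R,\varepsilon>0$ there is $S>0$ such that every ball $\bar B(x,S)$, $x\in X$, contains an $(R,\varepsilon)$-Følner set. *)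

theory Defs
  imports "HOL-Analysis.Analysis" "HOL-Library.Extended_Nonnegative_Real"
begin

definition ext_metric :: "('a \<Rightarrow> 'a \<Rightarrow> ennreal) \<Rightarrow> bool" where
  "ext_metric d \<longleftrightarrow>
     (\<forall>x y. d x y = 0 \<longleftrightarrow> x = y) \<and>
     (\<forall>x y. d x y = d y x) \<and>
     (\<forall>x y z. d x z \<le> d x y + d y z)"

text \<open>d(x,A) = inf of d(x,a) over a in A (= \<infinity> for A empty).\<close>
definition setdist :: "('a \<Rightarrow> 'a \<Rightarrow> ennreal) \<Rightarrow> 'a \<Rightarrow> 'a set \<Rightarrow> ennreal" where
  "setdist d x A = (INF a\<in>A. d x a)"

definition cnbhd :: "('a \<Rightarrow> 'a \<Rightarrow> ennreal) \<Rightarrow> 'a set \<Rightarrow> real \<Rightarrow> 'a set" where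
  "cnbhd d A R = {x. setdist d x A \<le> ennreal R}"

definition unif_loc_finite :: "('a \<Rightarrow> 'a \<Rightarrow> ennreal) \<Rightarrow> bool" where
  "unif_loc_finite d \<longleftrightarrow>
     (\<forall>R>0. \<exists>N::nat. \<forall>x. finite (cnbhd d {x} R) \<and> card (cnbhd d {x} R) \<le> N)"

definition outer_boundary :: "('a \<Rightarrow> 'a \<Rightarrow> ennreal) \<Rightarrow> real \<Rightarrow> 'a set \<Rightarrow> 'a set" where
  "outer_boundary d R A = {x. x \<notin> A \<and> setdist d x A \<le> ennreal R}"

definition boundary :: "('a \<Rightarrow> 'a \<Rightarrow> ennreal) \<Rightarrow> real \<Rightarrow> 'a set \<Rightarrow> 'a set" where
  "boundary d R A = {x. setdist d x A \<le> ennreal R \<and> setdist d x (- A) \<le> ennreal R}"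

definition folner :: "('a \<Rightarrow> 'a \<Rightarrow> ennreal) \<Rightarrow> real \<Rightarrow> real \<Rightarrow> 'a set \<Rightarrow> bool" where
  "folner d R \<epsilon> F \<longleftrightarrow> finite F \<and> F \<noteq> {} \<and> finite (boundary d R F) \<and>
     real (card (boundary d R F)) \<le> \<epsilon> * real (card F)"

definition ubiq_amenable :: "('a \<Rightarrow> 'a \<Rightarrow> ennreal) \<Rightarrow> bool" where
  "ubiq_amenable d \<longleftrightarrow>
     (\<forall>R>0. \<forall>\<epsilon>>0. \<exists>S>0. \<forall>x. \<exists>F. F \<subseteq> cnbhd d {x} S \<and> folner d R \<epsilon> F)"

end

theory Submission imports Defs begin

(* Grow M by the neighbourhoods A_j = B(M, j r). While A_j is not itself a valid choice of F, its
   outer r-boundary, which lies in A_(j+1) - A_j, has more than eps |A_j| points, so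
   |A_n| >= (1 + eps)^n |M|, which for large n beats |B(M, r)| by any prescribed factor.
   By uniform local finiteness a maximal 2s-separated set Y in A_n then has comparably many
   points, and the (r, eps/2)-Folner sets G_y in B(y, s) supplied by ubiquitous amenability
   are pairwise disjoint. The set F = M Un U, with U the union of the G_y, works: its outer
   r-boundary lies in B(M, r) together with the r-boundaries of the G_y, and both parts are
   small compared with |U| >= |Y|. *)

lemma ennreal_add_INF: "(c::ennreal) + (INF a\<in>A. f a) = (INF a\<in>A. c + f a)"
proof (cases "A = {}")
  case False
  then show ?thesis
    using continuous_at_Inf_mono[of "\<lambda>x. c + x" "f ` A"]
    by (simp add: mono_def add_left_mono image_comp continuous_add)
qed (simp add: top_unique)

lemma ext_metric_triangle: "ext_metric d \<Longrightarrow> d x z \<le> d x y + d y z"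
  unfolding ext_metric_def by blast

lemma ext_metric_sym: "ext_metric d \<Longrightarrow> d x y = d y x"
  unfolding ext_metric_def by blast

lemma ext_metric_self [simp]: "ext_metric d \<Longrightarrow> d x x = 0"
  unfolding ext_metric_def by blast

lemma setdist_le: "a \<in> A \<Longrightarrow> setdist d x A \<le> d x a"
  unfolding setdist_def by (rule INF_lower)

lemma setdist_singleton [simp]: "setdist d x {y} = d x y"
  by (simp add: setdist_def)

lemma setdist_empty [simp]: "setdist d x {} = \<infinity>"
  by (simp add: setdist_def)

lemma setdist_Un: "setdist d x (A \<union> B) = min (setdist d x A) (setdist d x B)"
  by (simp add: setdist_def INF_union inf_min)

lemma setdist_triangle: "ext_metric d \<Longrightarrow> setdist d x A \<le> d x y + setdist d y A"
  unfolding setdist_def ennreal_add_INF by (intro INF_mono') (rule ext_metric_triangle)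

lemma mem_cnbhd_singleton [simp]: "x \<in> cnbhd d {y} R \<longleftrightarrow> d x y \<le> ennreal R"
  by (simp add: cnbhd_def)

lemma cnbhd_empty [simp]: "cnbhd d {} R = {}"
  by (simp add: cnbhd_def top_unique)

lemma cnbhd_Un: "cnbhd d (A \<union> B) R = cnbhd d A R \<union> cnbhd d B R"
  by (auto simp: cnbhd_def setdist_Un min_le_iff_disj)

lemma cnbhd_eq_UN: "finite M \<Longrightarrow> cnbhd d M R = (\<Union>m\<in>M. cnbhd d {m} R)"
proof (induction M rule: finite_induct)
  case (insert m M)
  then show ?case using cnbhd_Un[of d "{m}" M R] by simp
qed simp

lemma subset_cnbhd:
  assumes "ext_metric d"
  shows "M \<subseteq> cnbhd d M R"
proof
  fix x assume "x \<in> M"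
  then have "setdist d x M \<le> 0" using setdist_le[of x M d x] assms by simp
  then show "x \<in> cnbhd d M R" by (simp add: cnbhd_def)
qed

lemma cnbhd_mono:
  assumes "A \<subseteq> B" "R \<le> R'"
  shows "cnbhd d A R \<subseteq> cnbhd d B R'"
proof
  fix x assume "x \<in> cnbhd d A R"
  then have "setdist d x A \<le> ennreal R" by (simp add: cnbhd_def)
  moreover have "setdist d x B \<le> setdist d x A"
    unfolding setdist_def using assms(1) by (rule INF_superset_mono) simp
  moreover have "ennreal R \<le> ennreal R'" using assms(2) by (rule ennreal_leI)
  ultimately show "x \<in> cnbhd d B R'" by (simp add: cnbhd_def)
qed

lemma cnbhd_cnbhd_subset:
  assumes "ext_metric d" "0 \<le> s" "0 \<le> t"
  shows "cnbhd d (cnbhd d M t) s \<subseteq> cnbhd d M (t + s)"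
proof
  fix x assume "x \<in> cnbhd d (cnbhd d M t) s"
  then have near: "setdist d x (cnbhd d M t) \<le> ennreal s" by (simp add: cnbhd_def)
  have "setdist d x M \<le> ennreal t + setdist d x (cnbhd d M t)"
    unfolding setdist_def[of d x "cnbhd d M t"] ennreal_add_INF
  proof (rule INF_greatest)
    fix a assume "a \<in> cnbhd d M t"
    then have "setdist d a M \<le> ennreal t" by (simp add: cnbhd_def)
    then show "setdist d x M \<le> ennreal t + d x a"
      using setdist_triangle[OF assms(1), of x M a] by (metis add.commute add_left_mono order_trans)
  qed
  also have "\<dots> \<le> ennreal t + ennreal s" using near by (rule add_left_mono)
  finally show "x \<in> cnbhd d M (t + s)" using assms by (simp add: cnbhd_def ennreal_plus)
qed

lemma cnbhd_singleton_disjoint: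
  assumes "ext_metric d" "0 \<le> s" "\<not> d y y' \<le> ennreal (2 * s)"
  shows "cnbhd d {y} s \<inter> cnbhd d {y'} s = {}"
proof (rule ccontr)
  assume "cnbhd d {y} s \<inter> cnbhd d {y'} s \<noteq> {}"
  then obtain z where "d z y \<le> ennreal s" "d z y' \<le> ennreal s" by auto
  then have "d y z + d z y' \<le> ennreal s + ennreal s"
    by (simp add: add_mono ext_metric_sym[OF assms(1), of y z])
  then have "d y y' \<le> ennreal (2 * s)"
    using ext_metric_triangle[OF assms(1), of y y' z] assms(2) by (simp add: ennreal_plus[symmetric])
  with assms(3) show False ..
qed

lemma outer_boundary_subset_cnbhd: "outer_boundary d r A \<subseteq> cnbhd d A r"
  by (auto simp: outer_boundary_def cnbhd_def)

lemma outer_boundary_subset_boundary: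
  assumes "ext_metric d"
  shows "outer_boundary d r A \<subseteq> boundary d r A"
proof
  fix x assume x: "x \<in> outer_boundary d r A"
  then have "setdist d x (- A) \<le> 0" using setdist_le[of x "- A" d x] assms by (simp add: outer_boundary_def)
  with x show "x \<in> boundary d r A" by (simp add: outer_boundary_def boundary_def)
qed

lemma outer_boundary_Un: "outer_boundary d r (A \<union> B) \<subseteq> outer_boundary d r A \<union> outer_boundary d r B"
  by (auto simp: outer_boundary_def setdist_Un min_le_iff_disj)

lemma outer_boundary_UN:
  "finite I \<Longrightarrow> outer_boundary d r (\<Union>i\<in>I. A i) \<subseteq> (\<Union>i\<in>I. outer_boundary d r (A i))"
proof (induction I rule: finite_induct)
  case empty
  then show ?case by (simp add: outer_boundary_def top_unique)
next
  case (insert i I)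
  then show ?case using outer_boundary_Un[of d r "A i" "\<Union>i\<in>I. A i"] by auto
qed

lemma outer_boundary_cnbhd_subset:
  assumes "ext_metric d" "0 \<le> r" "0 \<le> t"
  shows "outer_boundary d r (cnbhd d M t) \<subseteq> cnbhd d M (t + r) - cnbhd d M t"
  using outer_boundary_subset_cnbhd cnbhd_cnbhd_subset[OF assms(1,2,3)]
  by (fastforce simp: outer_boundary_def)

lemma exists_maximal_separated_subset:
  assumes "finite P" "\<And>a b. R a b \<Longrightarrow> R b a" "\<And>a. R a a"
  shows "\<exists>Y\<subseteq>P. pairwise (\<lambda>y y'. \<not> R y y') Y \<and> (\<forall>x\<in>P. \<exists>y\<in>Y. R x y)"
  using assms(1)
proof (induction P rule: finite_induct)
  case (insert x P)
  then obtain Y where Y: "Y \<subseteq> P" "pairwise (\<lambda>y y'. \<not> R y y') Y" "\<forall>x\<in>P. \<exists>y\<in>Y. R x y"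
    by blast
  show ?case
  proof (cases "\<exists>y\<in>Y. R x y")
    case True
    with Y show ?thesis by (intro exI[of _ Y]) auto
  next
    case False
    with Y(2) assms(2) have "pairwise (\<lambda>y y'. \<not> R y y') (insert x Y)"
      unfolding pairwise_insert by blast
    with Y assms(3) show ?thesis by (intro exI[of _ "insert x Y"]) auto
  qed
qed simp

lemma card_cnbhd_le:
  assumes "finite M" "\<And>x. finite (cnbhd d {x} R)" "\<And>x. card (cnbhd d {x} R) \<le> N"
  shows "finite (cnbhd d M R)" "card (cnbhd d M R) \<le> N * card M"
proof -
  show "finite (cnbhd d M R)"
    unfolding cnbhd_eq_UN[OF assms(1)] using assms(1,2) by (rule finite_UN_I)
  have "card (cnbhd d M R) \<le> (\<Sum>m\<in>M. card (cnbhd d {m} R))"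
    unfolding cnbhd_eq_UN[OF assms(1)] using assms(1) by (rule card_UN_le)
  also have "\<dots> \<le> (\<Sum>m\<in>M. N)" using assms(3) by (rule sum_mono)
  finally show "card (cnbhd d M R) \<le> N * card M" by (simp add: mult.commute)
qed

lemma unif_loc_finite_card_cnbhd:
  assumes "unif_loc_finite d" "0 < R"
  obtains N :: nat where "0 < N" "\<And>M. finite M \<Longrightarrow> card (cnbhd d M R) \<le> N * card M"
proof -
  obtain N where "\<And>x. finite (cnbhd d {x} R)" "\<And>x. card (cnbhd d {x} R) \<le> Suc N"
    using assms unfolding unif_loc_finite_def by (meson le_SucI)
  then show ?thesis using card_cnbhd_le(2) that[of "Suc N"] by blast
qed

lemma unif_loc_finite_finite_cnbhd:
  assumes "unif_loc_finite d" "finite M"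
  shows "finite (cnbhd d M R)"
proof -
  obtain N where "\<And>x. finite (cnbhd d {x} (max R 1))" "\<And>x. card (cnbhd d {x} (max R 1)) \<le> N"
    using assms(1) unfolding unif_loc_finite_def by (meson max.strict_coboundedI2 zero_less_one)
  then have "finite (cnbhd d M (max R 1))" using assms(2) by (rule card_cnbhd_le(1)[rotated])
  then show ?thesis by (rule finite_subset[rotated]) (simp add: cnbhd_mono)
qed

definition outer_folner :: "('a \<Rightarrow> 'a \<Rightarrow> ennreal) \<Rightarrow> real \<Rightarrow> real \<Rightarrow> 'a set \<Rightarrow> bool" where
  "outer_folner d r \<epsilon> F \<longleftrightarrow> finite F \<and> finite (outer_boundary d r F) \<and>
     real (card (outer_boundary d r F)) \<le> \<epsilon> * real (card F)"

lemma card_cnbhd_add_outer_boundary: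
  assumes "ext_metric d" "unif_loc_finite d" "finite M" "0 \<le> r" "0 \<le> t"
  shows "finite (outer_boundary d r (cnbhd d M t))"
    and "card (cnbhd d M t) + card (outer_boundary d r (cnbhd d M t)) \<le> card (cnbhd d M (t + r))"
proof -
  let ?A = "cnbhd d M t" and ?B = "outer_boundary d r (cnbhd d M t)"
  have fin: "finite (cnbhd d M (t + r))" "finite ?A"
    using assms(2,3) by (auto intro: unif_loc_finite_finite_cnbhd)
  have sub: "?B \<subseteq> cnbhd d M (t + r) - ?A" by (rule outer_boundary_cnbhd_subset[OF assms(1,4,5)])
  then show finB: "finite ?B" using fin(1) finite_subset by blast
  have "card ?A + card ?B = card (?A \<union> ?B)"
    using fin(2) finB sub by (intro card_Un_disjoint[symmetric]) auto
  also have "\<dots> \<le> card (cnbhd d M (t + r))"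
    using sub fin(1) cnbhd_mono[of M M t "t + r" d] assms(4) by (intro card_mono) auto
  finally show "card ?A + card ?B \<le> card (cnbhd d M (t + r))" .
qed

lemma card_cnbhd_ge_power:
  assumes "ext_metric d" "unif_loc_finite d" "finite M" "0 \<le> r" "0 \<le> \<epsilon>"
    and "\<And>j. j < n \<Longrightarrow> \<not> outer_folner d r \<epsilon> (cnbhd d M (real j * r))"
  shows "(1 + \<epsilon>) ^ n * real (card M) \<le> real (card (cnbhd d M (real n * r)))"
  using assms(6)
proof (induction n)
  case 0
  have "card M \<le> card (cnbhd d M 0)"
    using subset_cnbhd[OF assms(1)] unif_loc_finite_finite_cnbhd[OF assms(2,3)] by (rule card_mono[rotated])
  then show ?case by simp
next
  case (Suc n)
  let ?A = "cnbhd d M (real n * r)" and ?B = "outer_boundary d r (cnbhd d M (real n * r))"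
  note step = card_cnbhd_add_outer_boundary[OF assms(1-4), of "real n * r"]
  have "\<epsilon> * card ?A < card ?B"
    using Suc.prems[of n] step(1) unif_loc_finite_finite_cnbhd[OF assms(2,3)] assms(4)
    by (auto simp: outer_folner_def)
  moreover have "real (card ?A) + card ?B \<le> card (cnbhd d M (real (Suc n) * r))"
    using step(2) assms(4) by (simp add: distrib_right add.commute flip: of_nat_add)
  ultimately have "(1 + \<epsilon>) * card ?A \<le> card (cnbhd d M (real (Suc n) * r))"
    by (simp add: distrib_right)
  moreover have "(1 + \<epsilon>) ^ n * card M \<le> card ?A" using Suc by simp
  ultimately show ?case
    using assms(5) by (simp add: mult.assoc order_trans[OF mult_left_mono])
qed

lemma outer_folner_Un_separated_folner:
  assumes "ext_metric d" "unif_loc_finite d" "finite M" "finite Y" "0 \<le> s" "0 \<le> \<epsilon>"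
    and sep: "pairwise (\<lambda>y y'. \<not> d y y' \<le> ennreal (2 * s)) Y"
    and G: "\<And>y. G y \<subseteq> cnbhd d {y} s" "\<And>y. folner d r (\<epsilon> / 2) (G y)"
    and small: "2 * real (card (cnbhd d M r)) \<le> \<epsilon> * real (card Y)"
  shows "outer_folner d r \<epsilon> (M \<union> (\<Union>y\<in>Y. G y))"
proof -
  define U where "U = (\<Union>y\<in>Y. G y)"
  have Gfin: "finite (G y)" "G y \<noteq> {}" "finite (boundary d r (G y))"
    and Gcard: "real (card (boundary d r (G y))) \<le> \<epsilon> / 2 * real (card (G y))" for y
    using G(2)[of y] by (auto simp: folner_def)
  have "G y \<inter> G y' = {}" if "y \<in> Y" "y' \<in> Y" "y \<noteq> y'" for y y'
    using cnbhd_singleton_disjoint[OF assms(1,5)] G(1)[of y] G(1)[of y'] sep that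
    unfolding pairwise_def by blast
  then have cardU: "card U = (\<Sum>y\<in>Y. card (G y))"
    unfolding U_def using assms(4) Gfin(1) by (intro card_UN_disjoint) auto
  have "card Y \<le> card U"
    unfolding cardU using sum_mono[of Y "\<lambda>_. 1::nat" "\<lambda>y. card (G y)"] Gfin
    by (simp add: Suc_leI card_gt_0_iff)
  have Ufin: "finite U" using assms(4) Gfin(1) by (simp add: U_def)
  have cnbhd_fin: "finite (cnbhd d M r)" using assms(2,3) by (rule unif_loc_finite_finite_cnbhd)
  have sub: "outer_boundary d r (M \<union> U) \<subseteq> cnbhd d M r \<union> (\<Union>y\<in>Y. boundary d r (G y))"
    using outer_boundary_Un[of d r M U] outer_boundary_subset_cnbhd[of d r M]
      outer_boundary_UN[OF assms(4), of d r G] outer_boundary_subset_boundary[OF assms(1)]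
    unfolding U_def by blast
  have fin: "finite (cnbhd d M r \<union> (\<Union>y\<in>Y. boundary d r (G y)))"
    using cnbhd_fin assms(4) Gfin(3) by blast
  have "card (outer_boundary d r (M \<union> U))
      \<le> card (cnbhd d M r) + (\<Sum>y\<in>Y. card (boundary d r (G y)))"
    using card_mono[OF fin sub] card_Un_le[of "cnbhd d M r" "\<Union>y\<in>Y. boundary d r (G y)"]
      card_UN_le[OF assms(4), of "\<lambda>y. boundary d r (G y)"]
    by linarith
  then have "real (card (outer_boundary d r (M \<union> U)))
      \<le> real (card (cnbhd d M r)) + (\<Sum>y\<in>Y. real (card (boundary d r (G y))))"
    by (metis of_nat_add of_nat_le_iff of_nat_sum)
  also have "\<dots> \<le> \<epsilon> / 2 * card Y + (\<Sum>y\<in>Y. \<epsilon> / 2 * card (G y))"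
    using small Gcard by (intro add_mono sum_mono) auto
  also have "\<dots> = \<epsilon> / 2 * card Y + \<epsilon> / 2 * card U"
    by (simp add: cardU sum_distrib_left)
  also have "\<dots> \<le> \<epsilon> * card U"
    using \<open>card Y \<le> card U\<close> assms(6) by (simp add: mult_left_mono field_simps)
  also have "\<dots> \<le> \<epsilon> * card (M \<union> U)"
    using assms(3,6) Ufin by (intro mult_left_mono) (auto intro: card_mono)
  finally show ?thesis
    using assms(3) Ufin fin sub finite_subset unfolding outer_folner_def U_def by blast
qed

lemma exists_outer_folner_near_cnbhd:
  assumes "ext_metric d" "unif_loc_finite d" "finite M" "0 < s" "0 \<le> t" "0 \<le> \<epsilon>"
    and G: "\<And>y. G y \<subseteq> cnbhd d {y} s" "\<And>y. folner d r (\<epsilon> / 2) (G y)"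
    and K: "0 < K" "\<And>Y. finite Y \<Longrightarrow> card (cnbhd d Y (2 * s)) \<le> K * card Y"
    and large: "2 * real K * real (card (cnbhd d M r)) \<le> \<epsilon> * real (card (cnbhd d M t))"
  shows "\<exists>F. M \<subseteq> F \<and> F \<subseteq> cnbhd d M (t + s) \<and> outer_folner d r \<epsilon> F"
proof -
  let ?A = "cnbhd d M t"
  have Afin: "finite ?A" using assms(2,3) by (rule unif_loc_finite_finite_cnbhd)
  obtain Y where Y: "Y \<subseteq> ?A" "pairwise (\<lambda>y y'. \<not> d y y' \<le> ennreal (2 * s)) Y"
    "\<forall>x\<in>?A. \<exists>y\<in>Y. d x y \<le> ennreal (2 * s)"
    using exists_maximal_separated_subset[OF Afin, of "\<lambda>y y'. d y y' \<le> ennreal (2 * s)"]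
      ext_metric_sym[OF assms(1)] assms(1) by auto
  have Yfin: "finite Y" using Afin Y(1) finite_subset by blast
  have "?A \<subseteq> cnbhd d Y (2 * s)"
    using Y(3) setdist_le[of _ Y d] by (fastforce simp: cnbhd_def intro: order_trans)
  then have "card ?A \<le> K * card Y"
    using K(2)[OF Yfin] unif_loc_finite_finite_cnbhd[OF assms(2) Yfin] card_mono le_trans by blast
  then have "\<epsilon> * real (card ?A) \<le> \<epsilon> * (real K * real (card Y))"
    using assms(6) by (intro mult_left_mono) (simp_all flip: of_nat_mult)
  then have "real K * (2 * real (card (cnbhd d M r))) \<le> real K * (\<epsilon> * real (card Y))"
    using large by (simp add: algebra_simps)
  then have small: "2 * real (card (cnbhd d M r)) \<le> \<epsilon> * real (card Y)"
    using K(1) by simp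
  have "(\<Union>y\<in>Y. G y) \<subseteq> cnbhd d ?A s"
    using G(1) Y(1) cnbhd_mono[of "{_}" ?A s s d] by blast
  also have "\<dots> \<subseteq> cnbhd d M (t + s)" using assms(1,4,5) by (intro cnbhd_cnbhd_subset) auto
  finally have "M \<union> (\<Union>y\<in>Y. G y) \<subseteq> cnbhd d M (t + s)" using subset_cnbhd[OF assms(1)] by blast
  moreover have "outer_folner d r \<epsilon> (M \<union> (\<Union>y\<in>Y. G y))"
    using assms(1-3) Yfin assms(4,6) Y(2) G small
    by (intro outer_folner_Un_separated_folner) auto
  ultimately show ?thesis by blast
qed

theorem proposition3p5:
  fixes d :: "'a \<Rightarrow> 'a \<Rightarrow> ennreal"
  assumes "ext_metric d" and "ubiq_amenable d" and "unif_loc_finite d"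
  shows "\<forall>r>0. \<forall>\<epsilon>>0. \<exists>S>0. \<forall>M. finite M \<and> M \<noteq> {} \<longrightarrow>
           (\<exists>F. finite F \<and> M \<subseteq> F \<and> F \<subseteq> cnbhd d M S \<and>
                finite (outer_boundary d r F) \<and>
                real (card (outer_boundary d r F)) \<le> \<epsilon> * real (card F))"
proof (intro allI impI)
  fix r \<epsilon> :: real assume r: "r > 0" and \<epsilon>: "\<epsilon> > 0"
  obtain s where s: "s > 0" and "\<forall>x. \<exists>F. F \<subseteq> cnbhd d {x} s \<and> folner d r (\<epsilon> / 2) F"
    using assms(2) r \<epsilon> unfolding ubiq_amenable_def by (meson half_gt_zero)
  then obtain G where G: "\<And>x. G x \<subseteq> cnbhd d {x} s" "\<And>x. folner d r (\<epsilon> / 2) (G x)"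
    by metis
  obtain Kr where Kr: "\<And>M. finite M \<Longrightarrow> card (cnbhd d M r) \<le> Kr * card M"
    using unif_loc_finite_card_cnbhd[OF assms(3) r] by blast
  obtain K where K: "0 < K" "\<And>M. finite M \<Longrightarrow> card (cnbhd d M (2 * s)) \<le> K * card M"
    using unif_loc_finite_card_cnbhd[OF assms(3), of "2 * s"] s by auto
  obtain n :: nat where "2 * real K * real Kr / \<epsilon> < (1 + \<epsilon>) ^ n"
    using real_arch_pow[of "1 + \<epsilon>"] \<epsilon> by auto
  then have n: "2 * real K * real Kr \<le> \<epsilon> * (1 + \<epsilon>) ^ n"
    using \<epsilon> by (simp add: field_simps)
  show "\<exists>S>0. \<forall>M. finite M \<and> M \<noteq> {} \<longrightarrow>
           (\<exists>F. finite F \<and> M \<subseteq> F \<and> F \<subseteq> cnbhd d M S \<and>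
                finite (outer_boundary d r F) \<and>
                real (card (outer_boundary d r F)) \<le> \<epsilon> * real (card F))"
  proof (intro exI[of _ "real n * r + s"] conjI allI impI)
    show "0 < real n * r + s" using r s by (simp add: add_nonneg_pos)
    fix M :: "'a set" assume "finite M \<and> M \<noteq> {}"
    then have M: "finite M" by simp
    have "\<exists>F. M \<subseteq> F \<and> F \<subseteq> cnbhd d M (real n * r + s) \<and> outer_folner d r \<epsilon> F"
    proof (cases "\<exists>j<n. outer_folner d r \<epsilon> (cnbhd d M (real j * r))")
      case True
      then obtain j where "j < n" "outer_folner d r \<epsilon> (cnbhd d M (real j * r))" by blast
      moreover have "cnbhd d M (real j * r) \<subseteq> cnbhd d M (real n * r + s)"
        using \<open>j < n\<close> r s by (intro cnbhd_mono) (auto intro: add_increasing2 mult_right_mono)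
      ultimately show ?thesis using subset_cnbhd[OF assms(1)] by blast
    next
      case False
      have "2 * real K * real (card (cnbhd d M r)) \<le> 2 * real K * (real Kr * real (card M))"
        using Kr[OF M] by (simp flip: of_nat_mult)
      also have "\<dots> \<le> \<epsilon> * ((1 + \<epsilon>) ^ n * real (card M))"
        using mult_right_mono[OF n, of "real (card M)"] by (simp add: algebra_simps)
      also have "\<dots> \<le> \<epsilon> * real (card (cnbhd d M (real n * r)))"
        using card_cnbhd_ge_power[OF assms(1,3) M, of r \<epsilon> n] False r \<epsilon> by (simp add: mult_left_mono)
      finally show ?thesis
        using exists_outer_folner_near_cnbhd[OF assms(1,3) M s _ _ G K] r \<epsilon> by simp
    qed
    then show "\<exists>F. finite F \<and> M \<subseteq> F \<and> F \<subseteq> cnbhd d M (real n * r + s) \<and>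
                finite (outer_boundary d r F) \<and>
                real (card (outer_boundary d r F)) \<le> \<epsilon> * real (card F)"
      by (auto simp: outer_folner_def)
  qed
qed

end
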